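(* Let $\mathcal P\subseteq\mathcal G$ be a group property. If $\mathcal P$ has the Baire property as a subset of $\mathcal G$, then $\mathcal P$ is either meager or comeager in $\mathcal G$.
   Context: Let $\mathbb N=\{1,2,3,\dots\}$. Equip $\mathbb N^{\mathbb N\times\mathbb N}$ (the set of infinite tables of natural numbers) with the product topology of the discrete topology on $\mathbb N$. Let $\mathcal G$ be the subspace consisting of those $A\in\mathbb N^{\mathbb N\times\mathbb N}$ that are the multiplication table of a group on the underlying set $\mathbb N$ whose identity element is $1$ (i.e. $A(n,m)$ is the product $n\cdot m$). For $G\in\mathcal G$, $\overline G$ denotes the group on $\mathbb N$ with multiplication table $G$. A group property is a set $\mathcal P\subseteq\mathcal G$ that is invariant under isomorphism: if $G\in\mathcal G$, $H\in\mathcal P$ and $\overline G\cong\overline H$, then $G\in\mathcal P$. A set has the Baire property if it is the symmetric difference of an open set and a meager set. *)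

theory Defs
  imports "HOL-Analysis.Analysis" "HOL-Algebra.Group"
begin

definition nowhere_dense_in :: "'a topology \<Rightarrow> 'a set \<Rightarrow> bool" where
  "nowhere_dense_in X S \<longleftrightarrow> S \<subseteq> topspace X \<and> X interior_of (X closure_of S) = {}"

definition meager_in :: "'a topology \<Rightarrow> 'a set \<Rightarrow> bool" where
  "meager_in X S \<longleftrightarrow> S \<subseteq> topspace X \<and>
     (\<exists>F. countable F \<and> (\<forall>N\<in>F. nowhere_dense_in X N) \<and> S \<subseteq> \<Union>F)"

definition comeager_in :: "'a topology \<Rightarrow> 'a set \<Rightarrow> bool" where
  "comeager_in X S \<longleftrightarrow> S \<subseteq> topspace X \<and> meager_in X (topspace X - S)"

definition baire_property_in :: "'a topology \<Rightarrow> 'a set \<Rightarrow> bool" where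
  "baire_property_in X S \<longleftrightarrow>
     (\<exists>U M. openin X U \<and> meager_in X M \<and> S = (U - M) \<union> (M - U))"

abbreviation Npos :: "nat set" where "Npos \<equiv> {1..}"

text \<open>\<open>\<nat>\<^sup>\<nat>\<^sup>\<times>\<^sup>\<nat>\<close> with the product of discrete topologies; points are
  (extensional) functions on \<open>\<nat> \<times> \<nat>\<close> with values in \<open>\<nat>\<close>.\<close>
definition tables_top :: "(nat \<times> nat \<Rightarrow> nat) topology" where
  "tables_top = product_topology (\<lambda>_. discrete_topology Npos) (Npos \<times> Npos)"

definition grp_of :: "(nat \<times> nat \<Rightarrow> nat) \<Rightarrow> nat monoid" where
  "grp_of A = \<lparr>carrier = Npos, mult = (\<lambda>n m. A (n, m)), one = 1\<rparr>"

definition GrpTables :: "(nat \<times> nat \<Rightarrow> nat) set" where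
  "GrpTables = {A \<in> topspace tables_top. group (grp_of A)}"

definition G_top :: "(nat \<times> nat \<Rightarrow> nat) topology" where
  "G_top = subtopology tables_top GrpTables"

definition group_property :: "(nat \<times> nat \<Rightarrow> nat) set \<Rightarrow> bool" where
  "group_property P \<longleftrightarrow> P \<subseteq> GrpTables \<and>
     (\<forall>G\<in>GrpTables. \<forall>H\<in>P. grp_of G \<cong> grp_of H \<longrightarrow> G \<in> P)"

end

theory Submission
  imports Defs
begin

text \<open>Permutations \<open>s\<close> of \<open>\<nat>\<close> fixing \<open>1\<close> act on the space of group tables by
  relabelling, i.e. by transporting the group structure along \<open>s\<close>. They act by
  homeomorphisms and preserve the isomorphism type, so a group property is an invariant set.
  The space of group tables is a \<open>G\<^sub>\<delta>\<close> subset of a Polish space, hence a Baire space, and the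
  action is topologically transitive: the product \<open>H\<^sub>1 \<times> H\<^sub>2\<close> can be labelled so that its
  table agrees with \<open>H\<^sub>1\<close> on any prescribed finite part, and relabelled so that it agrees
  with \<open>H\<^sub>2\<close>. By the topological zero-one law an invariant set with the Baire property under
  a topologically transitive group of homeomorphisms of a Baire space is meager or comeager.\<close>

section \<open>Baire category\<close>

lemma meager_in_subset: "meager_in X S \<Longrightarrow> T \<subseteq> S \<Longrightarrow> meager_in X T"
  unfolding meager_in_def by (meson subset_trans)

lemma meager_in_Un:
  assumes "meager_in X S" "meager_in X T"
  shows "meager_in X (S \<union> T)"
proof -
  obtain \<F> \<G> where "countable \<F>" "\<forall>N\<in>\<F>. nowhere_dense_in X N" "S \<subseteq> \<Union>\<F>"
    and "countable \<G>" "\<forall>N\<in>\<G>. nowhere_dense_in X N" "T \<subseteq> \<Union>\<G>"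
    using assms unfolding meager_in_def by blast
  then show ?thesis
    using assms unfolding meager_in_def by (intro conjI exI[of _ "\<F> \<union> \<G>"]) auto
qed

lemma nowhere_dense_imp_meager_in: "nowhere_dense_in X N \<Longrightarrow> meager_in X N"
  unfolding meager_in_def by (intro conjI exI[of _ "{N}"]) (auto simp: nowhere_dense_in_def)

lemma nowhere_dense_in_closure_of_diff:
  assumes "openin X U"
  shows "nowhere_dense_in X (X closure_of U - U)"
proof -
  let ?I = "X interior_of (X closure_of U - U)"
  have "?I \<inter> U = {}"
    using interior_of_subset[of X "X closure_of U - U"] by blast
  then have "?I \<inter> X closure_of U = {}"
    by (simp add: openin_Int_closure_of_eq_empty)
  then have "?I = {}"
    using interior_of_subset[of X "X closure_of U - U"] by blast
  then show ?thesis
    using assms closure_of_subset_topspace[of X U]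
    by (auto simp: nowhere_dense_in_def closure_of_closedin closedin_diff)
qed

lemma nowhere_dense_in_homeomorphic_image:
  assumes f: "homeomorphic_map X Y f" and N: "nowhere_dense_in X N"
  shows "nowhere_dense_in Y (f ` N)"
proof -
  have "N \<subseteq> topspace X"
    using N by (simp add: nowhere_dense_in_def)
  then show ?thesis
    using N homeomorphic_imp_surjective_map[OF f]
    by (auto simp: nowhere_dense_in_def homeomorphic_map_closure_of[OF f]
        homeomorphic_map_interior_of[OF f closure_of_subset_topspace])
qed

lemma meager_in_homeomorphic_image:
  assumes f: "homeomorphic_map X Y f" and M: "meager_in X M"
  shows "meager_in Y (f ` M)"
proof -
  obtain \<F> where "countable \<F>" "\<forall>N\<in>\<F>. nowhere_dense_in X N" "M \<subseteq> \<Union>\<F>"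
    using M unfolding meager_in_def by blast
  then have "countable ((`) f ` \<F>)" "\<forall>N\<in>(`) f ` \<F>. nowhere_dense_in Y N"
    "f ` M \<subseteq> \<Union>((`) f ` \<F>)"
    using nowhere_dense_in_homeomorphic_image[OF f] by (auto simp flip: image_Union)
  moreover have "f ` M \<subseteq> topspace Y"
    using M homeomorphic_imp_surjective_map[OF f] by (auto simp: meager_in_def)
  ultimately show ?thesis
    unfolding meager_in_def by blast
qed

lemma meager_in_homeomorphic_preimage:
  assumes f: "homeomorphic_map X Y f" and M: "meager_in Y M"
  shows "meager_in X {x \<in> topspace X. f x \<in> M}"
proof -
  obtain g where fg: "homeomorphic_maps X Y f g"
    using f homeomorphic_map_maps by blast
  then have "{x \<in> topspace X. f x \<in> M} \<subseteq> g ` M"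
    by (force simp: homeomorphic_maps_def)
  moreover have "meager_in X (g ` M)"
    using fg M by (intro meager_in_homeomorphic_image) (auto simp: homeomorphic_maps_map)
  ultimately show ?thesis
    using meager_in_subset by blast
qed

lemma meager_in_openin_eq_empty:
  assumes X: "completely_metrizable_space X \<or> locally_compact_space X \<and> regular_space X"
    and W: "openin X W" "meager_in X W"
  shows "W = {}"
proof -
  obtain \<F> where \<F>: "countable \<F>" "\<forall>N\<in>\<F>. nowhere_dense_in X N" "W \<subseteq> \<Union>\<F>"
    using W unfolding meager_in_def by blast
  have "N \<subseteq> X closure_of N" if "N \<in> \<F>" for N
    using \<F>(2) that by (simp add: closure_of_subset nowhere_dense_in_def)
  then have "W \<subseteq> \<Union>((closure_of) X ` \<F>)"
    using \<F>(3) by blast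
  moreover have "X interior_of \<Union>((closure_of) X ` \<F>) = {}"
    using \<F> by (intro Baire_category_alt[OF X]) (auto simp: nowhere_dense_in_def)
  ultimately show ?thesis
    using interior_of_maximal[OF _ W(1)] by blast
qed

lemma topological_zero_one_law:
  assumes X: "completely_metrizable_space X \<or> locally_compact_space X \<and> regular_space X"
    and homeo: "\<And>g. g \<in> \<Gamma> \<Longrightarrow> homeomorphic_map X X g"
    and transitive: "\<And>U V. \<lbrakk>openin X U; U \<noteq> {}; openin X V; V \<noteq> {}\<rbrakk>
      \<Longrightarrow> \<exists>g\<in>\<Gamma>. \<exists>x\<in>V. g x \<in> U"
    and invariant: "\<And>g x. g \<in> \<Gamma> \<Longrightarrow> x \<in> topspace X \<Longrightarrow> g x \<in> P \<longleftrightarrow> x \<in> P"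
    and "baire_property_in X P"
  shows "meager_in X P \<or> comeager_in X P"
proof -
  obtain U M where U: "openin X U" and M: "meager_in X M" and P: "P = (U - M) \<union> (M - U)"
    using \<open>baire_property_in X P\<close> unfolding baire_property_in_def by blast
  have PX: "P \<subseteq> topspace X"
    using M openin_subset[OF U] unfolding P meager_in_def by blast
  define V where "V = topspace X - X closure_of U"
  have V: "openin X V" "V \<inter> U = {}"
    using closure_of_subset[OF openin_subset[OF U]] by (auto simp: V_def)
  consider "U = {}" | "V = {}" | "U \<noteq> {}" "V \<noteq> {}"
    by blast
  then show ?thesis
  proof cases
    case 1
    then have "P \<subseteq> M"
      using P by blast
    then show ?thesis
      using meager_in_subset[OF M] by blast
  next
    case 2
    then have "topspace X - P \<subseteq> M \<union> (X closure_of U - U)"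
      using P by (auto simp: V_def)
    moreover have "meager_in X (M \<union> (X closure_of U - U))"
      using meager_in_Un[OF M nowhere_dense_imp_meager_in[OF nowhere_dense_in_closure_of_diff[OF U]]] .
    ultimately have "meager_in X (topspace X - P)"
      by (rule meager_in_subset[rotated])
    then show ?thesis
      using PX by (simp add: comeager_in_def)
  next
    case 3
    then obtain g x where g: "g \<in> \<Gamma>" and x: "x \<in> V" "g x \<in> U"
      using transitive U V by blast
    define W where "W = {y \<in> topspace X. g y \<in> U} \<inter> V"
    have "openin X W"
      unfolding W_def
      using homeomorphic_imp_continuous_map[OF homeo[OF g]] U V
      by (intro openin_Int openin_continuous_map_preimage) auto
    moreover have "W \<subseteq> M \<union> {y \<in> topspace X. g y \<in> M}"
    proof
      fix y assume "y \<in> W"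
      then have "y \<in> topspace X" "y \<notin> U" "g y \<in> U"
        using V(2) by (auto simp: W_def)
      then show "y \<in> M \<union> {y \<in> topspace X. g y \<in> M}"
        using invariant[OF g, of y] unfolding P by blast
    qed
    moreover have "meager_in X (M \<union> {y \<in> topspace X. g y \<in> M})"
      using M homeo[OF g] by (intro meager_in_Un meager_in_homeomorphic_preimage)
    ultimately have "W = {}"
      using meager_in_openin_eq_empty[OF X] meager_in_subset by blast
    then show ?thesis
      using x by (auto simp: W_def V_def)
  qed
qed

section \<open>The space of group tables\<close>

lemma topspace_tables_top: "topspace tables_top = (\<Pi>\<^sub>E k\<in>Npos \<times> Npos. Npos)"
  by (simp add: tables_top_def)

lemma topspace_G_top: "topspace G_top = GrpTables"
  by (auto simp: G_top_def GrpTables_def)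

lemma table_in_Npos: "A \<in> topspace tables_top \<Longrightarrow> n \<in> Npos \<Longrightarrow> m \<in> Npos \<Longrightarrow> A (n, m) \<in> Npos"
  by (auto simp: topspace_tables_top PiE_iff)

lemma GrpTables_in_Npos: "A \<in> GrpTables \<Longrightarrow> n \<in> Npos \<Longrightarrow> m \<in> Npos \<Longrightarrow> A (n, m) \<in> Npos"
  using table_in_Npos by (auto simp: GrpTables_def)

lemma group_grp_of_iff:
  assumes "A \<in> topspace tables_top"
  shows "group (grp_of A) \<longleftrightarrow>
    (\<forall>a\<in>Npos. \<forall>b\<in>Npos. \<forall>c\<in>Npos. A (A (a, b), c) = A (a, A (b, c))) \<and>
    (\<forall>n\<in>Npos. A (1, n) = n) \<and> (\<forall>n\<in>Npos. \<exists>m\<in>Npos. A (m, n) = 1)"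
proof
  assume "group (grp_of A)"
  then interpret group "grp_of A" .
  show "(\<forall>a\<in>Npos. \<forall>b\<in>Npos. \<forall>c\<in>Npos. A (A (a, b), c) = A (a, A (b, c))) \<and>
    (\<forall>n\<in>Npos. A (1, n) = n) \<and> (\<forall>n\<in>Npos. \<exists>m\<in>Npos. A (m, n) = 1)"
    using m_assoc l_one l_inv_ex by (auto simp: grp_of_def)
next
  assume "(\<forall>a\<in>Npos. \<forall>b\<in>Npos. \<forall>c\<in>Npos. A (A (a, b), c) = A (a, A (b, c))) \<and>
    (\<forall>n\<in>Npos. A (1, n) = n) \<and> (\<forall>n\<in>Npos. \<exists>m\<in>Npos. A (m, n) = 1)"
  then show "group (grp_of A)"
    using table_in_Npos[OF assms] by (intro groupI) (auto simp: grp_of_def)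
qed

lemma GrpTables_one_mult: "A \<in> GrpTables \<Longrightarrow> n \<in> Npos \<Longrightarrow> A (1, n) = n"
  using group_grp_of_iff by (auto simp: GrpTables_def)

lemma openin_tables_top_eval_eq:
  assumes "k \<in> Npos \<times> Npos"
  shows "openin tables_top {A \<in> topspace tables_top. A k = v}"
proof -
  have "continuous_map tables_top (discrete_topology Npos) (\<lambda>A. A k)"
    using assms continuous_map_product_projection[of k "Npos \<times> Npos" "\<lambda>_. discrete_topology Npos"]
    by (simp add: tables_top_def)
  then have "openin tables_top {A \<in> topspace tables_top. A k \<in> {v} \<inter> Npos}"
    by (rule openin_continuous_map_preimage) simp
  moreover have "{A \<in> topspace tables_top. A k \<in> {v} \<inter> Npos} = {A \<in> topspace tables_top. A k = v}"
    using assms by (auto simp: topspace_tables_top PiE_iff)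
  ultimately show ?thesis
    by simp
qed

lemma gdelta_in_GrpTables: "gdelta_in tables_top GrpTables"
proof -
  let ?T = "topspace tables_top"
  let ?E = "\<lambda>k v. {A \<in> ?T. A k = v}"
  define Assoc where "Assoc = (\<lambda>(a, b, c). {A \<in> ?T. A (A (a, b), c) = A (a, A (b, c))})"
  define Unit where "Unit n = {A \<in> ?T. A (1, n) = n}" for n
  define Inv where "Inv n = {A \<in> ?T. \<exists>m\<in>Npos. A (m, n) = 1}" for n
  have Assoc: "openin tables_top (Assoc (a, b, c))" if "a \<in> Npos" "b \<in> Npos" "c \<in> Npos" for a b c
  proof -
    \<comment> \<open>Associativity at \<open>(a, b, c)\<close> only involves the four entries at \<open>(a, b)\<close>, \<open>(b, c)\<close>,
      \<open>(A (a, b), c)\<close> and \<open>(a, A (b, c))\<close>.\<close>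
    have "Assoc (a, b, c) =
      (\<Union>d\<in>Npos. \<Union>e\<in>Npos. \<Union>v. ?E (a, b) d \<inter> ?E (b, c) e \<inter> ?E (d, c) v \<inter> ?E (a, e) v)"
      using table_in_Npos that by (auto simp: Assoc_def)
    also have "openin tables_top \<dots>"
      using that by (auto intro!: openin_Union openin_Int openin_tables_top_eval_eq)
    finally show ?thesis .
  qed
  have Unit: "openin tables_top (Unit n)" if "n \<in> Npos" for n
    unfolding Unit_def using that by (intro openin_tables_top_eval_eq) auto
  have Inv: "openin tables_top (Inv n)" if "n \<in> Npos" for n
  proof -
    have "Inv n = (\<Union>m\<in>Npos. ?E (m, n) 1)"
      by (auto simp: Inv_def)
    then show ?thesis
      using that by (auto intro!: openin_Union openin_tables_top_eval_eq)
  qed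
  have "GrpTables = ?T \<inter> \<Inter>(Assoc ` (Npos \<times> Npos \<times> Npos)) \<inter> \<Inter>(Unit ` Npos) \<inter> \<Inter>(Inv ` Npos)"
    using group_grp_of_iff by (auto simp: GrpTables_def Assoc_def Unit_def Inv_def)
  also have "gdelta_in tables_top \<dots>"
    using Assoc Unit Inv
    by (intro gdelta_in_Int gdelta_in_topspace gdelta_in_Inter) (auto intro: open_imp_gdelta_in)
  finally show ?thesis .
qed

lemma completely_metrizable_space_G_top: "completely_metrizable_space G_top"
proof -
  have "completely_metrizable_space tables_top"
    by (simp add: tables_top_def completely_metrizable_space_product_topology
        completely_metrizable_space_discrete_topology)
  then show ?thesis
    unfolding G_top_def using gdelta_in_GrpTables by (rule completely_metrizable_space_gdelta_in)
qed

lemma openin_G_top_finite_support: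
  assumes "openin G_top U" "H \<in> U"
  obtains F where "finite F" "F \<subseteq> Npos"
    "\<And>A. A \<in> GrpTables \<Longrightarrow> (\<And>n m. n \<in> F \<Longrightarrow> m \<in> F \<Longrightarrow> A (n, m) = H (n, m)) \<Longrightarrow> A \<in> U"
proof -
  obtain U' where U': "openin tables_top U'" "U = U' \<inter> GrpTables"
    using assms(1) unfolding G_top_def openin_subtopology by blast
  then obtain W where W: "finite {k \<in> Npos \<times> Npos. W k \<noteq> Npos}"
    "H \<in> Pi\<^sub>E (Npos \<times> Npos) W" "Pi\<^sub>E (Npos \<times> Npos) W \<subseteq> U'"
    using assms(2) unfolding tables_top_def openin_product_topology_alt topspace_discrete_topology
    by blast
  define K where "K = {k \<in> Npos \<times> Npos. W k \<noteq> Npos}"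
  show ?thesis
  proof
    show "finite (fst ` K \<union> snd ` K)" "fst ` K \<union> snd ` K \<subseteq> Npos"
      using W(1) by (auto simp: K_def)
    fix A assume A: "A \<in> GrpTables"
      and agree: "\<And>n m. n \<in> fst ` K \<union> snd ` K \<Longrightarrow> m \<in> fst ` K \<union> snd ` K \<Longrightarrow> A (n, m) = H (n, m)"
    have "A k \<in> W k" if "k \<in> Npos \<times> Npos" for k
    proof (cases "k \<in> K")
      case True
      then have "A k = H k"
        using agree[of "fst k" "snd k"] by force
      then show ?thesis
        using W(2) that by auto
    next
      case False
      then show ?thesis
        using A that by (auto simp: K_def GrpTables_def topspace_tables_top PiE_iff)
    qed
    then have "A \<in> Pi\<^sub>E (Npos \<times> Npos) W"
      using A by (auto simp: GrpTables_def topspace_tables_top PiE_iff)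
    then show "A \<in> U"
      using A W(3) U'(2) by blast
  qed
qed

section \<open>Relabelling\<close>

definition transport_table :: "(nat \<Rightarrow> 'b) \<Rightarrow> ('b, 'm) monoid_scheme \<Rightarrow> nat \<times> nat \<Rightarrow> nat" where
  "transport_table f D = restrict (\<lambda>(n, m). inv_into Npos f (f n \<otimes>\<^bsub>D\<^esub> f m)) (Npos \<times> Npos)"

lemma transport_table_apply:
  "n \<in> Npos \<Longrightarrow> m \<in> Npos \<Longrightarrow> transport_table f D (n, m) = inv_into Npos f (f n \<otimes>\<^bsub>D\<^esub> f m)"
  by (simp add: transport_table_def)

lemma transport_table_eqI:
  assumes "inj_on f Npos" "n \<in> Npos" "m \<in> Npos" "x \<in> Npos" "f n \<otimes>\<^bsub>D\<^esub> f m = f x"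
  shows "transport_table f D (n, m) = x"
  using assms by (simp add: transport_table_apply)

lemma transport_table_cong:
  assumes "\<And>n. n \<in> Npos \<Longrightarrow> f n = g n"
  shows "transport_table f D = transport_table g D"
proof -
  have "inv_into Npos f = inv_into Npos g"
    using assms by (intro ext) (simp add: inv_into_def cong: conj_cong)
  then show ?thesis
    using assms by (auto simp: transport_table_def intro!: restrict_ext)
qed

lemma
  assumes D: "group D" and f: "bij_betw f Npos (carrier D)" "f 1 = \<one>\<^bsub>D\<^esub>"
  shows transport_table_GrpTables: "transport_table f D \<in> GrpTables"
    and transport_table_iso: "f \<in> iso (grp_of (transport_table f D)) D"
proof -
  interpret group D by fact
  let ?A = "transport_table f D"
  have inj: "inj_on f Npos" and fc: "\<And>n. n \<in> Npos \<Longrightarrow> f n \<in> carrier D"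
    using f by (auto simp: bij_betw_def)
  have closed: "?A (n, m) \<in> Npos" and hom: "f (?A (n, m)) = f n \<otimes>\<^bsub>D\<^esub> f m"
    if "n \<in> Npos" "m \<in> Npos" for n m
  proof -
    have prod: "f n \<otimes>\<^bsub>D\<^esub> f m \<in> f ` Npos"
      using that f fc by (simp add: bij_betw_def)
    show "?A (n, m) \<in> Npos" "f (?A (n, m)) = f n \<otimes>\<^bsub>D\<^esub> f m"
      using that inv_into_into[OF prod] f_inv_into_f[OF prod] by (simp_all add: transport_table_apply)
  qed
  have A: "?A \<in> topspace tables_top"
    using closed by (auto simp: topspace_tables_top transport_table_def)
  have "group (grp_of ?A)"
    unfolding group_grp_of_iff[OF A]
  proof (intro conjI ballI)
    fix a b c :: nat assume "a \<in> Npos" "b \<in> Npos" "c \<in> Npos"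
    then show "?A (?A (a, b), c) = ?A (a, ?A (b, c))"
      using closed hom fc by (intro inj_onD[OF inj]) (simp_all add: m_assoc)
  next
    fix n :: nat assume n: "n \<in> Npos"
    then show "?A (1, n) = n"
      using closed hom fc f(2) by (intro inj_onD[OF inj]) simp_all
    obtain y where y: "y \<in> carrier D" "y \<otimes>\<^bsub>D\<^esub> f n = \<one>\<^bsub>D\<^esub>"
      using l_inv_ex fc n by blast
    then obtain m where "m \<in> Npos" "f m = y"
      using f(1) by (metis bij_betw_imp_surj_on imageE)
    then show "\<exists>m\<in>Npos. ?A (m, n) = 1"
      using n y f(2) inj by (intro bexI[of _ m] transport_table_eqI) auto
  qed
  then show "?A \<in> GrpTables"
    using A by (simp add: GrpTables_def)
  show "f \<in> iso (grp_of ?A) D"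
    using f fc hom by (auto simp: iso_def hom_def grp_of_def)
qed

definition relabel :: "(nat \<Rightarrow> nat) \<Rightarrow> (nat \<times> nat \<Rightarrow> nat) \<Rightarrow> nat \<times> nat \<Rightarrow> nat" where
  "relabel s A = transport_table s (grp_of A)"

lemma
  assumes s: "bij_betw s Npos Npos" "s 1 = 1" and A: "A \<in> GrpTables"
  shows relabel_GrpTables: "relabel s A \<in> GrpTables"
    and relabel_iso: "grp_of (relabel s A) \<cong> grp_of A"
proof -
  have "group (grp_of A)" "bij_betw s Npos (carrier (grp_of A))" "s 1 = \<one>\<^bsub>grp_of A\<^esub>"
    using s A by (auto simp: GrpTables_def grp_of_def)
  then show "relabel s A \<in> GrpTables" "grp_of (relabel s A) \<cong> grp_of A"
    unfolding relabel_def is_iso_def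
    using transport_table_GrpTables transport_table_iso by blast+
qed

lemma relabel_transport_table:
  assumes D: "group D" and f: "bij_betw f Npos (carrier D)" and s: "bij_betw s Npos Npos"
  shows "relabel s (transport_table f D) = transport_table (f \<circ> s) D"
proof
  fix k :: "nat \<times> nat"
  show "relabel s (transport_table f D) k = transport_table (f \<circ> s) D k"
  proof (cases "k \<in> Npos \<times> Npos")
    case True
    then obtain n m where k: "k = (n, m)" "n \<in> Npos" "m \<in> Npos"
      by auto
    have s_k: "s n \<in> Npos" "s m \<in> Npos"
      using k bij_betw_apply[OF s] by auto
    have "f (s n) \<otimes>\<^bsub>D\<^esub> f (s m) \<in> f ` s ` Npos"
      using s_k f s monoid.m_closed[OF group.is_monoid[OF D]] bij_betw_apply[OF f]
      by (auto simp: bij_betw_def)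
    then show ?thesis
      using k s_k f s
      by (simp add: relabel_def transport_table_apply grp_of_def inv_into_comp bij_betw_def)
  next
    case False
    then show ?thesis
      by (simp add: relabel_def transport_table_def)
  qed
qed

lemma relabel_id:
  assumes "A \<in> topspace tables_top"
  shows "relabel id A = A"
proof
  fix k :: "nat \<times> nat"
  show "relabel id A k = A k"
  proof (cases "k \<in> Npos \<times> Npos")
    case True
    then show ?thesis
      using table_in_Npos[OF assms] by (auto simp: relabel_def grp_of_def intro: transport_table_eqI)
  next
    case False
    then show ?thesis
      using assms extensional_arb[of A "Npos \<times> Npos" k]
      by (simp add: relabel_def transport_table_def topspace_tables_top PiE_iff)
  qed
qed

lemma relabel_cong:
  assumes "\<And>n. n \<in> Npos \<Longrightarrow> s n = t n"
  shows "relabel s = relabel t"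
  unfolding relabel_def by (rule ext) (rule transport_table_cong[OF assms])

lemma relabel_relabel:
  assumes "A \<in> GrpTables" "bij_betw s Npos Npos" "bij_betw t Npos Npos"
  shows "relabel t (relabel s A) = relabel (s \<circ> t) A"
  using assms relabel_transport_table[of "grp_of A" s t]
  by (simp add: relabel_def GrpTables_def grp_of_def)

lemma
  assumes s: "bij_betw s Npos Npos" and A: "A \<in> GrpTables"
  shows relabel_inv_relabel: "relabel (inv_into Npos s) (relabel s A) = A"
    and relabel_relabel_inv: "relabel s (relabel (inv_into Npos s) A) = A"
proof -
  have s': "bij_betw (inv_into Npos s) Npos Npos"
    using s by (rule bij_betw_inv_into)
  have "relabel (s \<circ> inv_into Npos s) = relabel id" "relabel (inv_into Npos s \<circ> s) = relabel id"
    using s by (auto intro!: relabel_cong simp: bij_betw_inv_into_right bij_betw_inv_into_left)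
  then show "relabel (inv_into Npos s) (relabel s A) = A" "relabel s (relabel (inv_into Npos s) A) = A"
    using A relabel_relabel[OF A s s'] relabel_relabel[OF A s' s] relabel_id
    by (simp_all add: GrpTables_def)
qed

lemma continuous_map_relabel_tables_top:
  assumes s: "bij_betw s Npos Npos"
  shows "continuous_map tables_top tables_top (relabel s)"
proof -
  have "continuous_map tables_top (discrete_topology Npos) (\<lambda>A. relabel s A k)"
    if "k \<in> Npos \<times> Npos" for k
  proof -
    from that obtain n m where k: "k = (n, m)" "n \<in> Npos" "m \<in> Npos"
      by auto
    then have "(s n, s m) \<in> Npos \<times> Npos"
      using bij_betw_apply[OF s] by auto
    then have "continuous_map tables_top (discrete_topology Npos) (\<lambda>A. A (s n, s m))"
      using continuous_map_product_projection[of _ "Npos \<times> Npos" "\<lambda>_. discrete_topology Npos"]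
      by (simp add: tables_top_def)
    moreover have "continuous_map (discrete_topology Npos) (discrete_topology Npos) (inv_into Npos s)"
      using bij_betw_apply[OF bij_betw_inv_into[OF s]]
      by (auto simp: continuous_map_from_discrete_topology)
    moreover have "(\<lambda>A. relabel s A k) = inv_into Npos s \<circ> (\<lambda>A. A (s n, s m))"
      using k by (auto simp: relabel_def transport_table_apply grp_of_def)
    ultimately show ?thesis
      by (simp add: continuous_map_compose)
  qed
  moreover have "relabel s ` topspace tables_top \<subseteq> extensional (Npos \<times> Npos)"
    by (auto simp: relabel_def transport_table_def)
  ultimately show ?thesis
    unfolding tables_top_def continuous_map_componentwise by blast
qed

lemma continuous_map_relabel:
  assumes s: "bij_betw s Npos Npos" "s 1 = 1"
  shows "continuous_map G_top G_top (relabel s)"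
  unfolding G_top_def
  using relabel_GrpTables[OF s] continuous_map_relabel_tables_top[OF s(1)]
  by (intro continuous_map_into_subtopology continuous_map_from_subtopology) auto

lemma homeomorphic_map_relabel:
  assumes s: "bij_betw s Npos Npos" "s 1 = 1"
  shows "homeomorphic_map G_top G_top (relabel s)"
proof -
  have s': "bij_betw (inv_into Npos s) Npos Npos" "inv_into Npos s 1 = 1"
    using bij_betw_inv_into[OF s(1)] s by (auto simp: bij_betw_def intro: inv_into_f_eq)
  have "homeomorphic_maps G_top G_top (relabel s) (relabel (inv_into Npos s))"
    unfolding homeomorphic_maps_def topspace_G_top
    using continuous_map_relabel[OF s] continuous_map_relabel[OF s']
      relabel_inv_relabel[OF s(1)] relabel_relabel_inv[OF s(1)] by blast
  then show ?thesis
    using homeomorphic_map_maps by blast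
qed

lemma group_property_relabel_iff:
  assumes P: "group_property P" and s: "bij_betw s Npos Npos" "s 1 = 1" and A: "A \<in> GrpTables"
  shows "relabel s A \<in> P \<longleftrightarrow> A \<in> P"
proof -
  have "grp_of (relabel s A) \<cong> grp_of A"
    by (rule relabel_iso[OF s A])
  moreover have "grp_of A \<cong> grp_of (relabel s A)"
    using relabel_GrpTables[OF s A] calculation by (auto simp: GrpTables_def intro: group.iso_sym)
  ultimately show ?thesis
    using P relabel_GrpTables[OF s A] A unfolding group_property_def by blast
qed

lemma extend_inj_on_to_bij_betw:
  fixes e :: "'a \<Rightarrow> 'b"
  assumes AB: "countable A" "infinite A" "countable B" "infinite B"
    and e: "finite F" "F \<subseteq> A" "inj_on e F" "e ` F \<subseteq> B"
  obtains b where "bij_betw b A B" "\<And>x. x \<in> F \<Longrightarrow> b x = e x"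
proof -
  have "countable (A - F)" "infinite (A - F)" "countable (B - e ` F)" "infinite (B - e ` F)"
    using AB e by auto
  then obtain g where g: "bij_betw g (A - F) (B - e ` F)"
    by (meson bij_betw_trans bij_betw_from_nat_into to_nat_on_infinite)
  define b where "b x = (if x \<in> F then e x else g x)" for x
  have "bij_betw b F (e ` F)"
    using e(3) by (simp add: b_def bij_betw_def inj_on_def)
  moreover have "bij_betw b (A - F) (B - e ` F)"
    using g by (rule bij_betw_cong[THEN iffD1, rotated]) (simp add: b_def)
  ultimately have "bij_betw b (F \<union> (A - F)) (e ` F \<union> (B - e ` F))"
    by (rule bij_betw_combine) blast
  moreover have "F \<union> (A - F) = A" "e ` F \<union> (B - e ` F) = B"
    using e by auto
  ultimately show ?thesis
    using that by (simp add: b_def)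
qed

lemma embedding_extends_to_labelling:
  assumes D: "group D" "countable (carrier D)" "infinite (carrier D)"
    and H: "H \<in> GrpTables" and F: "finite F" "F \<subseteq> Npos"
    and e: "e \<in> hom (grp_of H) D" "inj_on e Npos"
  obtains b where "bij_betw b Npos (carrier D)" "b 1 = \<one>\<^bsub>D\<^esub>"
    "\<And>n m. n \<in> F \<Longrightarrow> m \<in> F \<Longrightarrow> transport_table b D (n, m) = H (n, m)"
proof -
  define E where "E = insert 1 (F \<union> H ` (F \<times> F))"
  have E: "finite E" "E \<subseteq> Npos"
    using F GrpTables_in_Npos[OF H] by (auto simp: E_def subset_iff)
  have e_carrier: "e n \<in> carrier D" if "n \<in> Npos" for n
    using e(1) that by (auto simp: hom_def grp_of_def)
  have e_mult: "e (H (n, m)) = e n \<otimes>\<^bsub>D\<^esub> e m" if "n \<in> Npos" "m \<in> Npos" for n m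
    using e(1) that by (auto simp: hom_def grp_of_def)
  obtain b where b: "bij_betw b Npos (carrier D)" "\<And>x. x \<in> E \<Longrightarrow> b x = e x"
    by (rule extend_inj_on_to_bij_betw[of Npos "carrier D" E e])
      (use D E e_carrier inj_on_subset[OF e(2) E(2)] infinite_Ici[of "1::nat"] in \<open>auto simp: subset_iff\<close>)
  show ?thesis
  proof (rule that[OF b(1)])
    show "b 1 = \<one>\<^bsub>D\<^esub>"
      using b(2) hom_one[OF e(1)] H D(1) by (simp add: E_def GrpTables_def grp_of_def)
    fix n m assume "n \<in> F" "m \<in> F"
    then have "n \<in> E" "m \<in> E" "H (n, m) \<in> E"
      by (auto simp: E_def)
    moreover from this have "n \<in> Npos" "m \<in> Npos" "H (n, m) \<in> Npos"
      using E(2) by blast+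
    ultimately show "transport_table b D (n, m) = H (n, m)"
      using b e_mult[of n m] by (intro transport_table_eqI) (auto simp: bij_betw_def)
  qed
qed

lemma transport_tables_related_by_relabel:
  assumes D: "group D" and b: "bij_betw b Npos (carrier D)" and c: "bij_betw c Npos (carrier D)"
    and bc: "b 1 = c 1"
  obtains s where "bij_betw s Npos Npos" "s 1 = 1" "relabel s (transport_table b D) = transport_table c D"
proof -
  define s where "s = inv_into Npos b \<circ> c"
  have s: "bij_betw s Npos Npos"
    unfolding s_def using c b by (rule bij_betw_trans[OF _ bij_betw_inv_into])
  have bs: "b (s x) = c x" if "x \<in> Npos" for x
    using that b c by (simp add: s_def bij_betw_inv_into_right bij_betw_apply)
  have "s 1 = 1"
    using bs[of 1] bc bij_betw_apply[OF s, of 1] by (intro inj_onD[OF bij_betw_imp_inj_on[OF b]]) auto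
  moreover have "relabel s (transport_table b D) = transport_table (b \<circ> s) D"
    using D b s by (rule relabel_transport_table)
  moreover have "\<dots> = transport_table c D"
    using bs by (intro transport_table_cong) simp
  ultimately show ?thesis
    using that s by simp
qed

lemma relabel_topologically_transitive:
  assumes U: "openin G_top U" "U \<noteq> {}" and V: "openin G_top V" "V \<noteq> {}"
  obtains s A where "bij_betw s Npos Npos" "s 1 = 1" "A \<in> V" "relabel s A \<in> U"
proof -
  obtain H1 H2 where H: "H1 \<in> V" "H2 \<in> U"
    using U V by blast
  then have H_Grp: "H1 \<in> GrpTables" "H2 \<in> GrpTables"
    using U V openin_subset topspace_G_top by blast+
  obtain F1 where F1: "finite F1" "F1 \<subseteq> Npos"
    and V_F1: "\<And>A. A \<in> GrpTables \<Longrightarrow> (\<And>n m. n \<in> F1 \<Longrightarrow> m \<in> F1 \<Longrightarrow> A (n, m) = H1 (n, m))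
      \<Longrightarrow> A \<in> V"
    using openin_G_top_finite_support[OF V(1) H(1)] by blast
  obtain F2 where F2: "finite F2" "F2 \<subseteq> Npos"
    and U_F2: "\<And>A. A \<in> GrpTables \<Longrightarrow> (\<And>n m. n \<in> F2 \<Longrightarrow> m \<in> F2 \<Longrightarrow> A (n, m) = H2 (n, m))
      \<Longrightarrow> A \<in> U"
    using openin_G_top_finite_support[OF U(1) H(2)] by blast
  \<comment> \<open>Two labellings of \<open>H1 \<times> H2\<close>: one sees \<open>H1\<close> on \<open>F1\<close>, the other sees \<open>H2\<close> on \<open>F2\<close>.\<close>
  define D where "D = grp_of H1 \<times>\<times> grp_of H2"
  have D: "group D" "countable (carrier D)" "infinite (carrier D)"
    using H_Grp infinite_Ici
    by (auto simp: D_def grp_of_def GrpTables_def finite_cartesian_product_iff intro: DirProd_group)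
  have "H1 (1, 1) = 1" "H2 (1, 1) = 1"
    using H_Grp GrpTables_one_mult by auto
  then have hom: "(\<lambda>x. (x, 1)) \<in> hom (grp_of H1) D" "(\<lambda>x. (1, x)) \<in> hom (grp_of H2) D"
    using H_Grp GrpTables_in_Npos by (auto simp: hom_def D_def grp_of_def)
  have inj: "inj_on (\<lambda>x. (x, 1 :: nat)) Npos" "inj_on (\<lambda>x. (1 :: nat, x)) Npos"
    by (auto simp: inj_on_def)
  obtain b where b: "bij_betw b Npos (carrier D)" "b 1 = \<one>\<^bsub>D\<^esub>"
    "\<And>n m. n \<in> F1 \<Longrightarrow> m \<in> F1 \<Longrightarrow> transport_table b D (n, m) = H1 (n, m)"
    using embedding_extends_to_labelling[OF D H_Grp(1) F1 hom(1) inj(1)] by blast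
  obtain c where c: "bij_betw c Npos (carrier D)" "c 1 = \<one>\<^bsub>D\<^esub>"
    "\<And>n m. n \<in> F2 \<Longrightarrow> m \<in> F2 \<Longrightarrow> transport_table c D (n, m) = H2 (n, m)"
    using embedding_extends_to_labelling[OF D H_Grp(2) F2 hom(2) inj(2)] by blast
  have "b 1 = c 1"
    using b(2) c(2) by simp
  then obtain s where s: "bij_betw s Npos Npos" "s 1 = 1"
    "relabel s (transport_table b D) = transport_table c D"
    by (rule transport_tables_related_by_relabel[OF D(1) b(1) c(1)])
  have "transport_table b D \<in> V"
    using V_F1 transport_table_GrpTables[OF D(1) b(1,2)] b(3) by blast
  moreover have "relabel s (transport_table b D) \<in> U"
    using U_F2 transport_table_GrpTables[OF D(1) c(1,2)] c(3) s(3) by simp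
  ultimately show ?thesis
    using that s(1,2) by blast
qed

theorem theorem5p3:
  assumes "group_property P"
    and "baire_property_in G_top P"
  shows "meager_in G_top P \<or> comeager_in G_top P"
proof (rule topological_zero_one_law)
  let ?\<Gamma> = "{relabel s | s. bij_betw s Npos Npos \<and> s 1 = 1}"
  show "completely_metrizable_space G_top \<or> locally_compact_space G_top \<and> regular_space G_top"
    using completely_metrizable_space_G_top by blast
  show "\<And>g. g \<in> ?\<Gamma> \<Longrightarrow> homeomorphic_map G_top G_top g"
    using homeomorphic_map_relabel by blast
  show "\<exists>g\<in>?\<Gamma>. \<exists>A\<in>V. g A \<in> U"
    if "openin G_top U" "U \<noteq> {}" "openin G_top V" "V \<noteq> {}" for U V
    using relabel_topologically_transitive[OF that] by blast
  show "\<And>g A. g \<in> ?\<Gamma> \<Longrightarrow> A \<in> topspace G_top \<Longrightarrow> g A \<in> P \<longleftrightarrow> A \<in> P"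
    using group_property_relabel_iff[OF assms(1)] by (auto simp: topspace_G_top)
qed (fact assms(2))

end
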